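(* Let $n=n_1\cdots n_\ell>2$ with integers $n_i\ge2$ and let $U=F_{(n_1,\dots,n_\ell)}$ (modes labelled as in the context); in particular $U=F_n$ or $U=H_n$ are allowed. For the $n$-photon distillation protocol determined by $U$ with input $\rho^{(n)}(\epsilon)$: (1) $h_n(\Phi_1)=\frac1n h_n(0)$; (2) $h_n(\epsilon)=h_n(0)-(n-1)h_n(0)\,\epsilon+O(\epsilon^2)$ as $\epsilon\to0$ ($n$ fixed).
   Context: For $m\ge2$, $F_m=\frac{1}{\sqrt m}(e^{2\pi i jk/m})_{0\le j,k\le m-1}$, $F_{(n_1,\dots,n_\ell)}=F_{n_1}\otimes\cdots\otimes F_{n_\ell}$, $H_{2^r}=F_{(2,\dots,2)}$; the basis vector $|m_1\rangle\otimes\cdots\otimes|m_\ell\rangle$ is identified with mode $m_1+n_1m_2+\cdots+(n_1\cdots n_{\ell-1})m_\ell$. Photons carry an external mode in $\{0,\dots,n-1\}$ and an internal state in a space with orthonormal basis $\{\xi_0,\xi_1,\dots\}$; $a_i^\dagger[\xi]$ creates a photon in mode $i$ with internal state $\xi$. $\hat U$ acts by $a_j^\dagger[\xi]\mapsto\sum_iU_{ij}a_i^\dagger[\xi]$. Ideal patterns of $U$: $(s_0,\dots,s_{n-1})$ with $\sum s_i=n$, $s_0=1$, $\langle s_0,\dots,s_{n-1}|\hat U|1,\dots,1\rangle\neq0$ (Fock states without internal degrees of freedom). Distillation protocol with input $\sigma$: apply $\hat U$, count photons (regardless of internal state) in modes $1,\dots,n-1$, set $s_0=n-\sum_{j\ge1}s_j$,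 and herald success iff $(s_0,\dots,s_{n-1})$ is ideal; $h_n(\sigma)$ is the success probability. Input $\rho^{(n)}(\epsilon)$: the photon in mode $i$ (one photon per mode) independently has internal state $\xi_0$ with probability $1-\epsilon$, and otherwise (URS model with parameter $R\ge1$) $\xi_j$ with probability $\epsilon/R$ for each $1\le j\le R$, or (OBB limit) $\xi_{i+1}$ with probability $\epsilon$. $h_n(\epsilon)=h_n(\rho^{(n)}(\epsilon))$, and $h_n(0)$ is the heralding rate for the input $|1,\dots,1\rangle$ with all photons in internal state $\xi_0$. Writing $\rho^{(n)}(\epsilon)=\sum_{k=0}^n\binom nk\epsilon^k(1-\epsilon)^{n-k}\Phi_k$, $\Phi_1$ is the normalized mixture of the terms $a_0^\dagger[\xi_{j_0}]\cdots a_{n-1}^\dagger[\xi_{j_{n-1}}]|\vec0\rangle$ in which exactly one index $j_i$ is nonzero (uniformly over the position $i$ and over the allowed error state). *)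

theory Defs
  imports Complex_Main "HOL-Library.FuncSet" "HOL-Library.Landau_Symbols"
begin

definition fourier :: "nat \<Rightarrow> nat \<Rightarrow> nat \<Rightarrow> complex" where
  "fourier m j k = exp (2 * of_real pi * \<i> * of_nat (j * k) / of_nat m) / of_real (sqrt (real m))"

text \<open>t-th digit of mode x in the mixed radix (n_1,...,n_l), with
  x = m_1 + n_1 m_2 + ... + (n_1...n_{l-1}) m_l (digit t is m_{t+1}).\<close>
definition digit :: "nat list \<Rightarrow> nat \<Rightarrow> nat \<Rightarrow> nat" where
  "digit ns t x = (x div prod_list (take t ns)) mod (ns ! t)"

text \<open>F_(n_1,...,n_l) = F_{n_1} tensor ... tensor F_{n_l} under the mode identification above.\<close>
definition fourier_tensor :: "nat list \<Rightarrow> nat \<Rightarrow> nat \<Rightarrow> complex" where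
  "fourier_tensor ns r c = (\<Prod>t<length ns. fourier (ns ! t) (digit ns t r) (digit ns t c))"

text \<open>Input: one photon in each mode i < n, with internal state xi_(lab i).
  Expanding prod_i (sum_k U k i a_k^dagger[xi_(lab i)]) |0>, each map f (photon i goes to
  output mode f i) contributes amplitude prod_i U (f i) i to the Fock state with
  internal-state-resolved occupations res_counts.\<close>

definition out_maps :: "nat \<Rightarrow> (nat \<Rightarrow> nat) set" where
  "out_maps n = Pi\<^sub>E {..<n} (\<lambda>_. {..<n})"

definition counts :: "nat \<Rightarrow> (nat \<Rightarrow> nat) \<Rightarrow> nat \<Rightarrow> nat" where
  "counts n f k = card {i. i < n \<and> f i = k}"

definition res_counts :: "nat \<Rightarrow> (nat \<Rightarrow> nat) \<Rightarrow> (nat \<Rightarrow> nat) \<Rightarrow> nat \<times> nat \<Rightarrow> nat" where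
  "res_counts n lab f = (\<lambda>(k, c). card {i. i < n \<and> f i = k \<and> lab i = c})"

text \<open>Probability of the resolved outcome M (occupation of mode k with internal state c):
  squared norm of the coefficient of prod_{k,c} (a_k^dagger[xi_c])^(M(k,c)) |0>.\<close>
definition res_prob :: "(nat \<Rightarrow> nat \<Rightarrow> complex) \<Rightarrow> nat \<Rightarrow> (nat \<Rightarrow> nat) \<Rightarrow> (nat \<times> nat \<Rightarrow> nat) \<Rightarrow> real" where
  "res_prob U n lab M =
     (cmod (\<Sum>f\<in>{f \<in> out_maps n. res_counts n lab f = M}. \<Prod>i<n. U (f i) i))\<^sup>2
     * (\<Prod>k<n. \<Prod>c\<in>lab ` {..<n}. fact (M (k, c)))"

text \<open>Amplitude <s_0,...,s_{n-1}| U |1,...,1> for indistinguishable photons.\<close>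
definition fock_amp :: "(nat \<Rightarrow> nat \<Rightarrow> complex) \<Rightarrow> nat \<Rightarrow> (nat \<Rightarrow> nat) \<Rightarrow> complex" where
  "fock_amp U n s = (\<Sum>f\<in>{f \<in> out_maps n. counts n f = s}. \<Prod>i<n. U (f i) i)
      * of_real (sqrt (\<Prod>k<n. fact (s k)))"

definition ideal :: "(nat \<Rightarrow> nat \<Rightarrow> complex) \<Rightarrow> nat \<Rightarrow> (nat \<Rightarrow> nat) \<Rightarrow> bool" where
  "ideal U n s \<longleftrightarrow> (\<Sum>k<n. s k) = n \<and> s 0 = 1 \<and> (\<forall>k\<ge>n. s k = 0) \<and> fock_amp U n s \<noteq> 0"

text \<open>Pattern used for heralding: counts in modes 1..n-1, and s_0 = n - sum_{j>=1} s_j.\<close>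
definition herald_pattern :: "nat \<Rightarrow> (nat \<Rightarrow> nat) \<Rightarrow> nat \<Rightarrow> nat" where
  "herald_pattern n t = (\<lambda>k. if k = 0 then n - (\<Sum>j\<in>{1..<n}. t j) else if k < n then t k else 0)"

text \<open>Heralding rate for the pure input with internal labels lab (photon counting ignores
  the internal state).\<close>
definition herald_rate :: "(nat \<Rightarrow> nat \<Rightarrow> complex) \<Rightarrow> nat \<Rightarrow> (nat \<Rightarrow> nat) \<Rightarrow> real" where
  "herald_rate U n lab =
     (\<Sum>M\<in>res_counts n lab ` out_maps n.
        if ideal U n (herald_pattern n (\<lambda>k. \<Sum>c\<in>lab ` {..<n}. M (k, c)))
        then res_prob U n lab M else 0)"

datatype noise = URS nat | OBB

text \<open>Allowed internal labels of the photon in mode i (0 = ideal state xi_0).\<close>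
fun allowed_labels :: "noise \<Rightarrow> nat \<Rightarrow> nat set" where
  "allowed_labels (URS R) i = {0..R}"
| "allowed_labels OBB i = {0, Suc i}"

fun label_weight :: "noise \<Rightarrow> real \<Rightarrow> nat \<Rightarrow> real" where
  "label_weight (URS R) \<epsilon> c = (if c = 0 then 1 - \<epsilon> else \<epsilon> / real R)"
| "label_weight OBB \<epsilon> c = (if c = 0 then 1 - \<epsilon> else \<epsilon>)"

text \<open>h_n(eps) = h_n(rho^(n)(eps)), by linearity of the success probability in the input state.\<close>
definition h_eps :: "noise \<Rightarrow> (nat \<Rightarrow> nat \<Rightarrow> complex) \<Rightarrow> nat \<Rightarrow> real \<Rightarrow> real" where
  "h_eps model U n \<epsilon> =
     (\<Sum>lab\<in>Pi\<^sub>E {..<n} (allowed_labels model).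
        (\<Prod>i<n. label_weight model \<epsilon> (lab i)) * herald_rate U n lab)"

definition error_labels :: "noise \<Rightarrow> nat \<Rightarrow> nat set" where
  "error_labels model i = allowed_labels model i - {0}"

text \<open>h_n(Phi_1): uniform mixture over the position i of the single error and its error state.\<close>
definition h_Phi1 :: "noise \<Rightarrow> (nat \<Rightarrow> nat \<Rightarrow> complex) \<Rightarrow> nat \<Rightarrow> real" where
  "h_Phi1 model U n =
     (\<Sum>i<n. \<Sum>c\<in>error_labels model i.
        herald_rate U n (\<lambda>k. if k = i then c else 0)
          / (real n * real (card (error_labels model i))))"

end

(*
  U = F_(n_1,...,n_l) has a transitive group of phase symmetries: translating the column
  index in Z_(n_1) x ... x Z_(n_l) only multiplies each row by a phase.  Consequently, among
  the assignments f of the n photons to output modes realising a pattern s, those with f i0 = k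
  carry the same amplitude for every input photon i0, namely s_k / n times the amplitude of s.
  If the photon in mode i0 is distinguishable, the detector additionally resolves its output
  mode k0, and the weights s_k0 of these refined outcomes sum to n, so the heralding rate is
  h_n(0) / n; this gives (1).  For (2), sort the input labellings by their set of errors: no
  error contributes (1 - eps)^n h_n(0), the single errors contribute n eps (1 - eps)^(n-1)
  h_n(0) / n, and every other labelling has weight at most eps^2.  Since
  (1 - eps)^n + eps (1 - eps)^(n-1) = (1 - eps)^(n-1) = 1 - (n-1) eps + O(eps^2), (2) follows.
*)
theory Submission
  imports Defs "HOL-Number_Theory.Cong"
begin

section \<open>Phase symmetries of the Fourier tensor\<close>

text \<open>The only property of \<^term>\<open>fourier_tensor ns\<close> used below: columns can be moved
  transitively by permutations that the rows undo up to phases.\<close>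

definition phase_transitive :: "(nat \<Rightarrow> nat \<Rightarrow> complex) \<Rightarrow> nat \<Rightarrow> bool" where
  "phase_transitive U n \<longleftrightarrow>
     (\<forall>i0<n. \<forall>i1<n. \<exists>\<pi> \<psi>. bij_betw \<pi> {..<n} {..<n} \<and> \<pi> i0 = i1 \<and>
        (\<forall>k. \<forall>i<n. U k (\<pi> i) = \<psi> k * U k i))"

lemma phase_transitiveI:
  assumes "\<And>i0 i1. i0 < n \<Longrightarrow> i1 < n \<Longrightarrow> \<exists>\<pi> \<psi>. bij_betw \<pi> {..<n} {..<n} \<and> \<pi> i0 = i1 \<and>
             (\<forall>k. \<forall>i<n. U k (\<pi> i) = \<psi> k * U k i)"
  shows "phase_transitive U n"
  using assms unfolding phase_transitive_def by blast

lemma phase_transitiveE: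
  assumes "phase_transitive U n" "i0 < n" "i1 < n"
  obtains \<pi> \<psi> where "bij_betw \<pi> {..<n} {..<n}" "\<pi> i0 = i1" "\<And>k i. i < n \<Longrightarrow> U k (\<pi> i) = \<psi> k * U k i"
  using assms unfolding phase_transitive_def by blast

text \<open>The tensor product \<open>A \<otimes> B\<close> of an \<open>m \<times> m\<close> and an \<open>N \<times> N\<close> matrix, with mode
  \<open>r\<close> of the product read as the pair \<open>(r mod m, r div m)\<close>, as in \<^const>\<open>digit\<close>.\<close>

definition kron :: "nat \<Rightarrow> (nat \<Rightarrow> nat \<Rightarrow> complex) \<Rightarrow> (nat \<Rightarrow> nat \<Rightarrow> complex) \<Rightarrow> nat \<Rightarrow> nat \<Rightarrow> complex" where
  "kron m A B r c = A (r mod m) (c mod m) * B (r div m) (c div m)"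

lemma fourier_tensor_Nil: "fourier_tensor [] = (\<lambda>r c. 1)"
  by (simp add: fun_eq_iff fourier_tensor_def)

lemma fourier_tensor_Cons: "fourier_tensor (m # ns) = kron m (fourier m) (fourier_tensor ns)"
  unfolding fun_eq_iff kron_def fourier_tensor_def
  by (simp only: length_Cons prod.lessThan_Suc_shift) (simp add: digit_def div_mult2_eq)

lemma bij_betw_add_mod:
  assumes "m > 0"
  shows "bij_betw (\<lambda>a. (a + d) mod m) {..<m} {..<(m::nat)}"
proof -
  have "inj_on (\<lambda>a. (a + d) mod m) {..<m}"
  proof (rule inj_onI)
    fix a b assume "a \<in> {..<m}" "b \<in> {..<m}" "(a + d) mod m = (b + d) mod m"
    then show "a = b"
      using cong_add_rcancel_nat[of a d b m] by (simp add: cong_def)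
  qed
  moreover have "(\<lambda>a. (a + d) mod m) ` {..<m} \<subseteq> {..<m}"
    using assms by auto
  ultimately show ?thesis
    by (simp add: bij_betw_def endo_inj_surj)
qed

lemma bij_betw_mixed_radix:
  assumes \<sigma>: "bij_betw \<sigma> {..<m} {..<m}" and \<tau>: "bij_betw \<tau> {..<N} {..<N}"
  shows "bij_betw (\<lambda>x. \<sigma> (x mod m) + m * \<tau> (x div m)) {..<m * N} {..<(m * N :: nat)}"
proof (cases "m = 0")
  case False
  let ?\<pi> = "\<lambda>x. \<sigma> (x mod m) + m * \<tau> (x div m)"
  have \<sigma>_lt: "\<sigma> a < m" if "a < m" for a
    using \<sigma> that by (auto dest: bij_betw_apply)
  have div_lt: "x div m < N" if "x < m * N" for x
    using that False by (simp add: div_less_iff_less_mult mult.commute)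
  have mod_\<pi>: "?\<pi> x mod m = \<sigma> (x mod m)" and div_\<pi>: "?\<pi> x div m = \<tau> (x div m)" for x
    using \<sigma>_lt[of "x mod m"] False by simp_all
  have "inj_on ?\<pi> {..<m * N}"
  proof (rule inj_onI)
    fix x y assume x: "x \<in> {..<m * N}" and y: "y \<in> {..<m * N}" and eq: "?\<pi> x = ?\<pi> y"
    have "\<sigma> (x mod m) = \<sigma> (y mod m)" using mod_\<pi>[of x] mod_\<pi>[of y] eq by metis
    then have "x mod m = y mod m"
      using \<sigma> False by (auto simp: bij_betw_def dest: inj_onD)
    moreover have "\<tau> (x div m) = \<tau> (y div m)" using div_\<pi>[of x] div_\<pi>[of y] eq by metis
    then have "x div m = y div m"
      using \<tau> x y div_lt by (auto simp: bij_betw_def dest: inj_onD)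
    ultimately show "x = y" by (metis div_mult_mod_eq)
  qed
  moreover have "?\<pi> ` {..<m * N} \<subseteq> {..<m * N}"
  proof (clarsimp)
    fix x assume "x < m * N"
    then have "\<tau> (x div m) < N" "\<sigma> (x mod m) < m"
      using \<tau> \<sigma>_lt div_lt False by (auto dest: bij_betw_apply)
    then have "\<sigma> (x mod m) + m * \<tau> (x div m) < m * (\<tau> (x div m) + 1)"
      by simp
    also have "\<dots> \<le> m * N"
      using \<open>\<tau> (x div m) < N\<close> by (intro mult_le_mono2) simp
    finally show "\<sigma> (x mod m) + m * \<tau> (x div m) < m * N" .
  qed
  ultimately show ?thesis
    by (simp add: bij_betw_def endo_inj_surj)
qed (simp add: bij_betw_def)

lemma exp_two_pi_i_of_nat: "exp (2 * of_real pi * \<i> * of_nat k) = 1"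
  by (metis exp_of_nat_mult exp_two_pi_i mult.commute power_one)

lemma fourier_mod:
  assumes "m > 0"
  shows "fourier m a (x mod m) = fourier m a x"
proof -
  let ?e = "\<lambda>y. 2 * of_real pi * \<i> * of_nat y / (of_nat m :: complex)"
  have "a * x = a * (x mod m) + m * (a * (x div m))"
    by (metis add_mult_distrib2 mod_mult_div_eq mult.left_commute)
  then have "of_nat (a * x) = of_nat (a * (x mod m)) + of_nat m * (of_nat (a * (x div m)) :: complex)"
    by (metis of_nat_add of_nat_mult)
  then have "?e (a * x) = ?e (a * (x mod m)) + 2 * of_real pi * \<i> * of_nat (a * (x div m))"
    using assms by (simp add: field_simps del: of_nat_mult)
  then have "exp (?e (a * x)) = exp (?e (a * (x mod m)))"
    by (simp only: exp_add exp_two_pi_i_of_nat mult_1_right)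
  then show ?thesis
    unfolding fourier_def by simp
qed

lemma fourier_add:
  "fourier m a (b + d) = exp (2 * of_real pi * \<i> * of_nat (a * d) / of_nat m) * fourier m a b"
  unfolding fourier_def by (simp add: distrib_left add_divide_distrib exp_add)

lemma phase_transitive_fourier:
  assumes "m > 0"
  shows "phase_transitive (fourier m) m"
proof (rule phase_transitiveI)
  fix i0 i1 assume "i0 < m" "i1 < m"
  define d where "d = i1 + m - i0"
  have "(i0 + d) mod m = i1"
    using \<open>i0 < m\<close> \<open>i1 < m\<close> by (simp add: d_def)
  moreover have "fourier m k ((i + d) mod m)
      = exp (2 * of_real pi * \<i> * of_nat (k * d) / of_nat m) * fourier m k i"
    for k i using assms by (simp only: fourier_mod fourier_add)
  ultimately show "\<exists>\<pi> \<psi>. bij_betw \<pi> {..<m} {..<m} \<and> \<pi> i0 = i1 \<and>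
      (\<forall>k. \<forall>i<m. fourier m k (\<pi> i) = \<psi> k * fourier m k i)"
    using bij_betw_add_mod[OF assms]
    by (intro exI[of _ "\<lambda>i. (i + d) mod m"]
        exI[of _ "\<lambda>k. exp (2 * of_real pi * \<i> * of_nat (k * d) / of_nat m)"]) auto
qed

lemma phase_transitive_kron:
  assumes A: "phase_transitive A m" and B: "phase_transitive B N"
  shows "phase_transitive (kron m A B) (m * N)"
proof (rule phase_transitiveI)
  fix i0 i1 assume i0: "i0 < m * N" and i1: "i1 < m * N"
  then have "m > 0" by (cases m) auto
  have div_lt: "x div m < N" if "x < m * N" for x
    using that \<open>m > 0\<close> by (simp add: div_less_iff_less_mult mult.commute)
  obtain \<sigma> \<phi> where \<sigma>: "bij_betw \<sigma> {..<m} {..<m}" "\<sigma> (i0 mod m) = i1 mod m"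
    and A_\<sigma>: "\<And>k i. i < m \<Longrightarrow> A k (\<sigma> i) = \<phi> k * A k i"
    using phase_transitiveE[OF A, of "i0 mod m" "i1 mod m"] \<open>m > 0\<close> by auto
  obtain \<tau> \<chi> where \<tau>: "bij_betw \<tau> {..<N} {..<N}" "\<tau> (i0 div m) = i1 div m"
    and B_\<tau>: "\<And>k i. i < N \<Longrightarrow> B k (\<tau> i) = \<chi> k * B k i"
    using phase_transitiveE[OF B, of "i0 div m" "i1 div m"] div_lt i0 i1 by auto
  define \<pi> where "\<pi> x = \<sigma> (x mod m) + m * \<tau> (x div m)" for x
  have "\<sigma> (x mod m) < m" for x
    using bij_betw_apply[OF \<sigma>(1), of "x mod m"] \<open>m > 0\<close> by simp
  then have mod_\<pi>: "\<pi> x mod m = \<sigma> (x mod m)" and div_\<pi>: "\<pi> x div m = \<tau> (x div m)" for x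
    using \<open>m > 0\<close> by (simp_all add: \<pi>_def)
  have "bij_betw \<pi> {..<m * N} {..<m * N}"
    unfolding \<pi>_def by (rule bij_betw_mixed_radix[OF \<sigma>(1) \<tau>(1)])
  moreover have "\<pi> i0 = i1"
    by (simp add: \<pi>_def \<sigma>(2) \<tau>(2))
  moreover have "kron m A B k (\<pi> i) = (\<phi> (k mod m) * \<chi> (k div m)) * kron m A B k i"
    if "i < m * N" for k i
    using that \<open>m > 0\<close> div_lt by (simp add: kron_def mod_\<pi> div_\<pi> A_\<sigma> B_\<tau>)
  ultimately show "\<exists>\<pi> \<psi>. bij_betw \<pi> {..<m * N} {..<m * N} \<and> \<pi> i0 = i1 \<and>
      (\<forall>k. \<forall>i<m * N. kron m A B k (\<pi> i) = \<psi> k * kron m A B k i)"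
    by (intro exI[of _ \<pi>] exI[of _ "\<lambda>k. \<phi> (k mod m) * \<chi> (k div m)"]) blast
qed

lemma phase_transitive_fourier_tensor:
  assumes "\<forall>m\<in>set ns. m > 0"
  shows "phase_transitive (fourier_tensor ns) (prod_list ns)"
  using assms
proof (induction ns)
  case Nil
  show ?case
    by (rule phase_transitiveI)
      (auto simp: fourier_tensor_Nil bij_betw_def
        intro!: exI[of _ "\<lambda>i::nat. i"] exI[of _ "\<lambda>_::nat. 1::complex"])
next
  case (Cons m ns)
  then show ?case
    by (simp add: fourier_tensor_Cons phase_transitive_kron phase_transitive_fourier)
qed

section \<open>Amplitudes of output assignments\<close>

definition map_amp :: "(nat \<Rightarrow> nat \<Rightarrow> complex) \<Rightarrow> nat \<Rightarrow> (nat \<Rightarrow> nat) \<Rightarrow> complex" where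
  "map_amp U n f = (\<Prod>i<n. U (f i) i)"

definition pattern_amp :: "(nat \<Rightarrow> nat \<Rightarrow> complex) \<Rightarrow> nat \<Rightarrow> (nat \<Rightarrow> nat) \<Rightarrow> complex" where
  "pattern_amp U n s = (\<Sum>f\<in>{f\<in>out_maps n. counts n f = s}. map_amp U n f)"

definition pattern_amp_at :: "(nat \<Rightarrow> nat \<Rightarrow> complex) \<Rightarrow> nat \<Rightarrow> nat \<Rightarrow> nat \<Rightarrow> (nat \<Rightarrow> nat) \<Rightarrow> complex" where
  "pattern_amp_at U n i k s = (\<Sum>f\<in>{f\<in>out_maps n. counts n f = s \<and> f i = k}. map_amp U n f)"

lemma finite_out_maps: "finite (out_maps n)"
  unfolding out_maps_def by (rule finite_PiE) auto

lemma out_maps_lt: "f \<in> out_maps n \<Longrightarrow> i < n \<Longrightarrow> f i < n"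
  unfolding out_maps_def by auto

lemma prod_eq_prod_power_counts:
  assumes "f \<in> out_maps n"
  shows "(\<Prod>i<n. \<psi> (f i)) = (\<Prod>k<n. \<psi> k ^ counts n f k)"
proof -
  have "(\<Prod>i<n. \<psi> (f i)) = (\<Prod>k<n. \<Prod>i\<in>{i. i \<in> {..<n} \<and> f i = k}. \<psi> (f i))"
    using assms out_maps_lt by (intro prod.group[symmetric]) auto
  also have "\<dots> = (\<Prod>k<n. \<psi> k ^ counts n f k)"
  proof (rule prod.cong[OF refl])
    fix k
    have "(\<Prod>i\<in>{i. i \<in> {..<n} \<and> f i = k}. \<psi> (f i)) = (\<Prod>i\<in>{i. i \<in> {..<n} \<and> f i = k}. \<psi> k)"
      by (rule prod.cong) auto
    then show "(\<Prod>i\<in>{i. i \<in> {..<n} \<and> f i = k}. \<psi> (f i)) = \<psi> k ^ counts n f k"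
      by (simp add: counts_def)
  qed
  finally show ?thesis .
qed

lemma counts_comp_perm:
  assumes "bij_betw \<pi> {..<n} {..<n}"
  shows "counts n (f \<circ> \<pi>) = counts n f"
proof
  fix k
  have "bij_betw \<pi> {i\<in>{..<n}. f (\<pi> i) = k} {j\<in>{..<n}. f j = k}"
    by (rule bij_betw_Collect[OF assms]) simp
  from bij_betw_same_card[OF this] show "counts n (f \<circ> \<pi>) k = counts n f k"
    unfolding counts_def by simp
qed

lemma bij_betw_out_maps_comp_perm:
  assumes \<pi>: "bij_betw \<pi> {..<n} {..<n}"
  shows "bij_betw (\<lambda>f. restrict (f \<circ> \<pi>) {..<n}) (out_maps n) (out_maps n)"
proof -
  have \<pi>_lt: "i < n \<Longrightarrow> \<pi> i < n" for i
    using bij_betw_apply[OF \<pi>] by simp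
  have "inj_on (\<lambda>f. restrict (f \<circ> \<pi>) {..<n}) (out_maps n)"
  proof (rule inj_onI)
    fix f g assume f: "f \<in> out_maps n" and g: "g \<in> out_maps n"
      and eq: "restrict (f \<circ> \<pi>) {..<n} = restrict (g \<circ> \<pi>) {..<n}"
    have "f j = g j" if "j < n" for j
    proof -
      have "j \<in> \<pi> ` {..<n}"
        using \<pi> \<open>j < n\<close> by (simp add: bij_betw_def)
      then obtain i where "i < n" "j = \<pi> i"
        by blast
      then show ?thesis using fun_cong[OF eq, of i] by simp
    qed
    then show "f = g"
      using f g unfolding out_maps_def by (intro PiE_ext) auto
  qed
  moreover have "restrict (f \<circ> \<pi>) {..<n} \<in> out_maps n" if "f \<in> out_maps n" for f
    using \<pi>_lt out_maps_lt[OF that] by (simp add: out_maps_def)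
  ultimately show ?thesis
    by (auto simp: bij_betw_def intro!: endo_inj_surj[OF finite_out_maps])
qed

lemma counts_restrict: "counts n (restrict f {..<n}) = counts n f"
  unfolding counts_def by (intro ext arg_cong[where f = card]) auto

lemma map_amp_restrict: "map_amp U n (restrict f {..<n}) = map_amp U n f"
  unfolding map_amp_def by (rule prod.cong) auto

lemma map_amp_comp_perm:
  assumes \<pi>: "bij_betw \<pi> {..<n} {..<n}" and U: "\<And>k i. i < n \<Longrightarrow> U k (\<pi> i) = \<psi> k * U k i"
    and f: "f \<in> out_maps n"
  shows "map_amp U n f = (\<Prod>k<n. \<psi> k ^ counts n f k) * map_amp U n (restrict (f \<circ> \<pi>) {..<n})"
proof -
  have "map_amp U n f = (\<Prod>i<n. U (f (\<pi> i)) (\<pi> i))"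
    unfolding map_amp_def by (rule prod.reindex_bij_betw[symmetric, OF \<pi>])
  also have "\<dots> = (\<Prod>i<n. \<psi> (f (\<pi> i))) * map_amp U n (f \<circ> \<pi>)"
    by (simp add: map_amp_def U prod.distrib)
  also have "(\<Prod>i<n. \<psi> (f (\<pi> i))) = (\<Prod>i<n. \<psi> (f i))"
    by (rule prod.reindex_bij_betw[OF \<pi>])
  also have "\<dots> = (\<Prod>k<n. \<psi> k ^ counts n f k)"
    by (rule prod_eq_prod_power_counts[OF f])
  finally show ?thesis
    by (simp only: map_amp_restrict)
qed

lemma pattern_amp_at_transfer:
  assumes \<pi>: "bij_betw \<pi> {..<n} {..<n}" and "\<pi> i0 = i1" "i0 < n"
    and U: "\<And>k i. i < n \<Longrightarrow> U k (\<pi> i) = \<psi> k * U k i"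
    and nonzero: "pattern_amp U n s \<noteq> 0"
  shows "pattern_amp_at U n i1 k s = pattern_amp_at U n i0 k s"
proof -
  let ?\<Phi> = "\<lambda>f. restrict (f \<circ> \<pi>) {..<n}"
  let ?c = "\<Prod>k<n. \<psi> k ^ s k"
  have reindex: "(\<Sum>f\<in>{f\<in>out_maps n. counts n f = s \<and> P (?\<Phi> f)}. map_amp U n f)
      = ?c * (\<Sum>g\<in>{g\<in>out_maps n. counts n g = s \<and> P g}. map_amp U n g)" for P
  proof -
    have "bij_betw ?\<Phi> {f\<in>out_maps n. counts n f = s \<and> P (?\<Phi> f)} {g\<in>out_maps n. counts n g = s \<and> P g}"
      using bij_betw_out_maps_comp_perm[OF \<pi>]
      by (rule bij_betw_Collect) (simp add: counts_restrict counts_comp_perm[OF \<pi>])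
    then have "(\<Sum>g\<in>{g\<in>out_maps n. counts n g = s \<and> P g}. map_amp U n g)
        = (\<Sum>f\<in>{f\<in>out_maps n. counts n f = s \<and> P (?\<Phi> f)}. map_amp U n (?\<Phi> f))"
      by (rule sum.reindex_bij_betw[symmetric])
    moreover have "map_amp U n f = ?c * map_amp U n (?\<Phi> f)" if "f \<in> out_maps n" "counts n f = s" for f
      using map_amp_comp_perm[where U = U and \<psi> = \<psi>, OF \<pi> U that(1)] that(2) by simp
    ultimately show ?thesis
      by (simp add: sum_distrib_left)
  qed
  have "?c = 1"
    using reindex[of "\<lambda>_. True"] nonzero by (simp add: pattern_amp_def)
  have "pattern_amp_at U n i1 k s = (\<Sum>f\<in>{f\<in>out_maps n. counts n f = s \<and> ?\<Phi> f i0 = k}. map_amp U n f)"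
    unfolding pattern_amp_at_def using assms(2,3) by simp
  also have "\<dots> = ?c * pattern_amp_at U n i0 k s"
    unfolding pattern_amp_at_def by (rule reindex)
  finally show ?thesis
    using \<open>?c = 1\<close> by simp
qed

text \<open>By phase transitivity \<^term>\<open>pattern_amp_at U n i k s\<close> does not depend on the photon
  \<open>i\<close>; summing over \<open>i\<close> counts every assignment once for each photon it sends to \<open>k\<close>.\<close>

lemma pattern_amp_at_eq:
  assumes U: "phase_transitive U n" and nonzero: "pattern_amp U n s \<noteq> 0" and "i0 < n"
  shows "of_nat n * pattern_amp_at U n i0 k s = of_nat (s k) * pattern_amp U n s"
proof -
  define S where "S = {f\<in>out_maps n. counts n f = s}"
  have "pattern_amp_at U n i k s = pattern_amp_at U n i0 k s" if "i < n" for i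
    using phase_transitiveE[OF U \<open>i0 < n\<close> that] pattern_amp_at_transfer \<open>i0 < n\<close> nonzero by metis
  then have "of_nat n * pattern_amp_at U n i0 k s = (\<Sum>i<n. pattern_amp_at U n i k s)"
    by simp
  also have "\<dots> = (\<Sum>i<n. \<Sum>f\<in>S. if f i = k then map_amp U n f else 0)"
    unfolding pattern_amp_at_def S_def
    by (simp add: sum.inter_filter[symmetric] finite_out_maps conj_assoc)
  also have "\<dots> = (\<Sum>f\<in>S. of_nat (counts n f k) * map_amp U n f)"
    by (subst sum.swap) (simp add: sum.If_cases counts_def Int_def)
  also have "\<dots> = of_nat (s k) * pattern_amp U n s"
    by (simp add: S_def pattern_amp_def sum_distrib_left)
  finally show ?thesis .
qed

section \<open>Labellings of the input by internal states\<close>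

lemma zero_in_allowed_labels [simp]: "0 \<in> allowed_labels model i"
  by (cases model) auto

lemma finite_allowed_labels [simp]: "finite (allowed_labels model i)"
  by (cases model) auto

lemma error_labels_URS [simp]: "error_labels (URS R) i = {1..R}"
  and error_labels_OBB [simp]: "error_labels OBB i = {Suc i}"
  by (auto simp: error_labels_def)

lemma finite_error_labels [simp]: "finite (error_labels model i)"
  by (cases model) auto

lemma card_error_labels_pos:
  assumes "\<forall>R. model = URS R \<longrightarrow> R \<ge> 1"
  shows "card (error_labels model i) > 0"
  using assms by (cases model) auto

lemma label_weight_0 [simp]: "label_weight model \<epsilon> 0 = 1 - \<epsilon>"
  by (cases model) auto

lemma label_weight_error:
  "c \<in> error_labels model i \<Longrightarrow> label_weight model \<epsilon> c = \<epsilon> / real (card (error_labels model i))"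
  by (cases model) auto

lemma sum_label_weight_error:
  assumes "\<forall>R. model = URS R \<longrightarrow> R \<ge> 1"
  shows "(\<Sum>c\<in>error_labels model i. label_weight model \<epsilon> c) = \<epsilon>"
proof -
  have "(\<Sum>c\<in>error_labels model i. label_weight model \<epsilon> c)
      = (\<Sum>c\<in>error_labels model i. \<epsilon> / real (card (error_labels model i)))"
    by (rule sum.cong) (simp_all add: label_weight_error)
  then show ?thesis
    using card_error_labels_pos[OF assms, of i] by (simp add: card_gt_0_iff)
qed

lemma label_weight_error_bounds:
  assumes "\<forall>R. model = URS R \<longrightarrow> R \<ge> 1" "0 \<le> \<epsilon>" "c \<noteq> 0"
  shows "0 \<le> label_weight model \<epsilon> c" "label_weight model \<epsilon> c \<le> \<epsilon>"
proof -
  have "0 \<le> label_weight model \<epsilon> c \<and> label_weight model \<epsilon> c \<le> \<epsilon>"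
  proof (cases model)
    case (URS R)
    then have "real R \<ge> 1"
      using assms(1) by simp
    then have "\<epsilon> / real R \<le> \<epsilon>"
      using assms(2) by (simp add: divide_le_eq mult_le_cancel_left1)
    then show ?thesis
      using URS assms(2,3) by simp
  qed (use assms in simp)
  then show "0 \<le> label_weight model \<epsilon> c" "label_weight model \<epsilon> c \<le> \<epsilon>"
    by simp_all
qed

definition error_sites :: "nat \<Rightarrow> (nat \<Rightarrow> nat) \<Rightarrow> nat set" where
  "error_sites n lab = {i. i < n \<and> lab i \<noteq> 0}"

lemma finite_error_sites [simp]: "finite (error_sites n lab)"
  by (simp add: error_sites_def)

lemma error_sites_subset: "error_sites n lab \<subseteq> {..<n}"
  by (auto simp: error_sites_def)

lemma labellings_with_error_sites:
  assumes "S \<subseteq> {..<n}"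
  shows "{lab \<in> Pi\<^sub>E {..<n} (allowed_labels model). error_sites n lab = S}
       = Pi\<^sub>E {..<n} (\<lambda>k. if k \<in> S then error_labels model k else {0})"
proof -
  have "lab \<in> Pi\<^sub>E {..<n} (allowed_labels model) \<and> error_sites n lab = S
      \<longleftrightarrow> lab \<in> Pi\<^sub>E {..<n} (\<lambda>k. if k \<in> S then error_labels model k else {0})" for lab
  proof -
    have sites: "error_sites n lab = S \<longleftrightarrow> (\<forall>k<n. k \<in> S \<longleftrightarrow> lab k \<noteq> 0)"
      using assms by (auto simp: error_sites_def)
    have pointwise: "lab k \<in> (if k \<in> S then error_labels model k else {0})
        \<longleftrightarrow> lab k \<in> allowed_labels model k \<and> (k \<in> S \<longleftrightarrow> lab k \<noteq> 0)" for k
      by (cases "k \<in> S") (auto simp: error_labels_def)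
    show ?thesis
      unfolding sites PiE_iff pointwise by blast
  qed
  then show ?thesis
    by blast
qed

lemma sum_weight_error_sites:
  assumes "\<forall>R. model = URS R \<longrightarrow> R \<ge> 1" "S \<subseteq> {..<n}"
  shows "(\<Sum>lab\<in>{lab \<in> Pi\<^sub>E {..<n} (allowed_labels model). error_sites n lab = S}.
            \<Prod>k<n. label_weight model \<epsilon> (lab k))
       = \<epsilon> ^ card S * (1 - \<epsilon>) ^ (n - card S)"
proof -
  have "(\<Sum>lab\<in>{lab \<in> Pi\<^sub>E {..<n} (allowed_labels model). error_sites n lab = S}.
            \<Prod>k<n. label_weight model \<epsilon> (lab k))
      = (\<Prod>k<n. \<Sum>c\<in>(if k \<in> S then error_labels model k else {0}). label_weight model \<epsilon> c)"
    unfolding labellings_with_error_sites[OF assms(2)] by (rule prod_sum_PiE[symmetric]) auto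
  also have "\<dots> = (\<Prod>k<n. if k \<in> S then \<epsilon> else 1 - \<epsilon>)"
    using sum_label_weight_error[OF assms(1)] by (intro prod.cong) auto
  also have "\<dots> = \<epsilon> ^ card S * (1 - \<epsilon>) ^ (n - card S)"
    using assms(2)
    by (simp add: prod.If_cases Int_absorb1 Diff_eq[symmetric] card_Diff_subset finite_subset)
  finally show ?thesis .
qed

lemma weight_le_power_error_sites:
  assumes "\<forall>R. model = URS R \<longrightarrow> R \<ge> 1" "0 \<le> \<epsilon>" "\<epsilon> \<le> 1"
  shows "0 \<le> (\<Prod>k<n. label_weight model \<epsilon> (lab k))"
    and "(\<Prod>k<n. label_weight model \<epsilon> (lab k)) \<le> \<epsilon> ^ card (error_sites n lab)"
proof -
  have bounds: "0 \<le> label_weight model \<epsilon> (lab k) \<and>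
      label_weight model \<epsilon> (lab k) \<le> (if lab k = 0 then 1 else \<epsilon>)" for k
    using label_weight_error_bounds[OF assms(1,2)] assms(2,3) by (cases "lab k = 0") auto
  then show "0 \<le> (\<Prod>k<n. label_weight model \<epsilon> (lab k))"
    by (simp add: prod_nonneg)
  have "(\<Prod>k<n. label_weight model \<epsilon> (lab k)) \<le> (\<Prod>k<n. if lab k = 0 then 1 else \<epsilon>)"
    using bounds by (intro prod_mono) auto
  also have "\<dots> = \<epsilon> ^ card (error_sites n lab)"
    by (simp add: prod.If_cases error_sites_def Int_def)
  finally show "(\<Prod>k<n. label_weight model \<epsilon> (lab k)) \<le> \<epsilon> ^ card (error_sites n lab)" .
qed

section \<open>Heralding rates with at most one distinguishable photon\<close>

definition indist_herald_rate :: "(nat \<Rightarrow> nat \<Rightarrow> complex) \<Rightarrow> nat \<Rightarrow> real" where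
  "indist_herald_rate U n = (\<Sum>s\<in>counts n ` out_maps n.
     if ideal U n s then (cmod (pattern_amp U n s))\<^sup>2 * (\<Prod>k<n. fact (s k)) else 0)"

lemma sum_counts: "f \<in> out_maps n \<Longrightarrow> (\<Sum>k<n. counts n f k) = n"
  unfolding counts_def using sum.group[of "{..<n}" "{..<n}" f "\<lambda>_. 1::nat"] out_maps_lt by auto

lemma counts_eq_0: "f \<in> out_maps n \<Longrightarrow> n \<le> k \<Longrightarrow> counts n f k = 0"
  unfolding counts_def using out_maps_lt by fastforce

lemma herald_pattern_counts:
  assumes "f \<in> out_maps n" "n \<ge> 1"
  shows "herald_pattern n (counts n f) = counts n f"
proof
  fix k
  have "(\<Sum>k<n. counts n f k) = counts n f 0 + (\<Sum>j\<in>{1..<n}. counts n f j)"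
    using assms(2) by (simp add: lessThan_atLeast0 sum.atLeast_Suc_lessThan)
  then show "herald_pattern n (counts n f) k = counts n f k"
    unfolding herald_pattern_def using sum_counts[OF assms(1)] counts_eq_0[OF assms(1)] by auto
qed

lemma herald_rate_reindex:
  fixes \<phi> :: "'x \<Rightarrow> nat \<times> nat \<Rightarrow> nat" and \<kappa> :: "(nat \<Rightarrow> nat) \<Rightarrow> 'x"
  assumes X: "finite X" and \<phi>: "inj_on \<phi> X"
    and \<kappa>: "\<And>f. f \<in> out_maps n \<Longrightarrow> \<kappa> f \<in> X \<and> res_counts n lab f = \<phi> (\<kappa> f)"
  shows "herald_rate U n lab =
    (\<Sum>x\<in>X. if ideal U n (herald_pattern n (\<lambda>k. \<Sum>c\<in>lab ` {..<n}. \<phi> x (k, c)))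
       then (cmod (\<Sum>f\<in>{f\<in>out_maps n. \<kappa> f = x}. map_amp U n f))\<^sup>2
              * (\<Prod>k<n. \<Prod>c\<in>lab ` {..<n}. fact (\<phi> x (k, c)))
       else 0)" (is "_ = (\<Sum>x\<in>X. ?rate x)")
proof -
  define F where "F M = (if ideal U n (herald_pattern n (\<lambda>k. \<Sum>c\<in>lab ` {..<n}. M (k, c)))
    then res_prob U n lab M else 0)" for M
  have "herald_rate U n lab = (\<Sum>M\<in>res_counts n lab ` out_maps n. F M)"
    unfolding herald_rate_def F_def ..
  also have "\<dots> = (\<Sum>M\<in>\<phi> ` X. F M)"
  proof (rule sum.mono_neutral_left)
    show "res_counts n lab ` out_maps n \<subseteq> \<phi> ` X"
    proof (rule image_subsetI)
      fix f assume "f \<in> out_maps n"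
      with \<kappa> show "res_counts n lab f \<in> \<phi> ` X"
        by (metis image_eqI)
    qed
    show "\<forall>M\<in>\<phi> ` X - res_counts n lab ` out_maps n. F M = 0"
    proof
      fix M assume "M \<in> \<phi> ` X - res_counts n lab ` out_maps n"
      then have no_map: "{f\<in>out_maps n. res_counts n lab f = M} = {}"
        by blast
      show "F M = 0"
        unfolding F_def res_prob_def no_map by simp
    qed
  qed (use X in simp)
  also have "\<dots> = (\<Sum>x\<in>X. F (\<phi> x))"
    by (rule sum.reindex[OF \<phi>, unfolded comp_def])
  also have "\<dots> = (\<Sum>x\<in>X. ?rate x)"
  proof (rule sum.cong[OF refl])
    fix x assume "x \<in> X"
    then have "res_counts n lab f = \<phi> x \<longleftrightarrow> \<kappa> f = x" if "f \<in> out_maps n" for f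
      using \<kappa>[OF that] inj_on_eq_iff[OF \<phi>] by metis
    then have "{f\<in>out_maps n. res_counts n lab f = \<phi> x} = {f\<in>out_maps n. \<kappa> f = x}"
      by blast
    then show "F (\<phi> x) = ?rate x"
      by (simp add: F_def res_prob_def map_amp_def)
  qed
  finally show ?thesis .
qed

lemma herald_rate_no_error:
  assumes "n \<ge> 1" "error_sites n lab = {}"
  shows "herald_rate U n lab = indist_herald_rate U n"
proof -
  have lab: "\<forall>i<n. lab i = 0"
    using assms(2) unfolding error_sites_def by blast
  define \<phi> where "\<phi> s = (\<lambda>(k, c::nat). if c = 0 then s k else 0::nat)" for s :: "nat \<Rightarrow> nat"
  have "lab ` {..<n} = (\<lambda>_. 0) ` {..<n}"
    using lab by (intro image_cong) auto
  then have labels: "lab ` {..<n} = {0}"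
    using \<open>n \<ge> 1\<close> by (simp add: image_constant_conv lessThan_empty_iff)
  have "inj \<phi>"
    by (rule injI) (simp add: \<phi>_def fun_eq_iff split: prod.splits, metis)
  moreover have "res_counts n lab f = \<phi> (counts n f)" for f
    using lab by (auto simp: res_counts_def counts_def \<phi>_def fun_eq_iff intro!: arg_cong[where f = card])
  ultimately have "herald_rate U n lab =
    (\<Sum>s\<in>counts n ` out_maps n. if ideal U n (herald_pattern n (\<lambda>k. \<Sum>c\<in>{0}. \<phi> s (k, c)))
       then (cmod (\<Sum>f\<in>{f\<in>out_maps n. counts n f = s}. map_amp U n f))\<^sup>2
              * (\<Prod>k<n. \<Prod>c\<in>{0}. fact (\<phi> s (k, c)))
       else 0)" (is "_ = (\<Sum>s\<in>_. ?summand s)")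
    unfolding labels[symmetric]
    by (intro herald_rate_reindex) (auto simp: finite_out_maps intro: inj_on_subset[OF _ subset_UNIV])
  also have "\<dots> = indist_herald_rate U n"
    unfolding indist_herald_rate_def pattern_amp_def
  proof (rule sum.cong[OF refl])
    fix s assume "s \<in> counts n ` out_maps n"
    then have "herald_pattern n s = s"
      using herald_pattern_counts \<open>n \<ge> 1\<close> by blast
    moreover have "(\<Sum>c\<in>{0}. \<phi> s (k, c)) = s k"
      and "(\<Prod>c\<in>{0}. fact (\<phi> s (k, c))) = (fact (s k) :: real)" for k
      by (simp_all add: \<phi>_def)
    ultimately show "?summand s = (if ideal U n s
        then (cmod (\<Sum>f\<in>{f\<in>out_maps n. counts n f = s}. map_amp U n f))\<^sup>2 * (\<Prod>k<n. fact (s k)) else 0)"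
      by (simp only:)
  qed
  finally show ?thesis .
qed

text \<open>Resolved counts of an outcome with ordinary pattern \<open>s\<close> in which the photon with
  internal state \<open>c\<close> ends up in mode \<open>k0\<close>.\<close>

definition single_error_res_counts :: "nat \<Rightarrow> (nat \<Rightarrow> nat) \<times> nat \<Rightarrow> nat \<times> nat \<Rightarrow> nat" where
  "single_error_res_counts c = (\<lambda>(s, k0) (k, c'). if c' = 0 then s k - (if k = k0 then 1 else 0)
                                                 else if c' = c \<and> k = k0 then 1 else 0)"

lemma res_counts_single_error:
  assumes "i0 < n" "c \<noteq> 0" and lab: "\<forall>k<n. lab k = (if k = i0 then c else 0)"
  shows "res_counts n lab f = single_error_res_counts c (counts n f, f i0)"
proof (rule ext, clarify)
  fix k c'
  have lab_c: "lab i = c \<longleftrightarrow> i = i0" and lab_0: "lab i = 0 \<longleftrightarrow> i \<noteq> i0" if "i < n" for i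
    using lab that \<open>c \<noteq> 0\<close> by auto
  consider "c' = 0" | "c' = c" | "c' \<noteq> 0" "c' \<noteq> c" by blast
  then show "res_counts n lab f (k, c') = single_error_res_counts c (counts n f, f i0) (k, c')"
  proof cases
    case 1
    then have "{i. i < n \<and> f i = k \<and> lab i = c'} = {i. i < n \<and> f i = k} - {i0}"
      using lab_0 by auto
    then show ?thesis
      using 1 \<open>i0 < n\<close>
      by (simp add: res_counts_def counts_def single_error_res_counts_def card_Diff_singleton_if
          eq_commute[of "f i0" k])
  next
    case 2
    have "{i. i < n \<and> f i = k \<and> lab i = c} = (if f i0 = k then {i0} else {})"
      using lab_c \<open>i0 < n\<close> by auto
    then show ?thesis
      using 2 \<open>c \<noteq> 0\<close>
      by (simp add: res_counts_def single_error_res_counts_def eq_commute[of "f i0" k])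
  next
    case 3
    then have "{i. i < n \<and> f i = k \<and> lab i = c'} = {}"
      using lab by auto
    then show ?thesis
      using 3 by (simp add: res_counts_def single_error_res_counts_def)
  qed
qed

lemma inj_on_single_error_res_counts:
  assumes "c \<noteq> 0"
  shows "inj_on (single_error_res_counts c) {(s, k0). 1 \<le> s k0}"
proof (rule inj_onI, clarify)
  fix s k0 t k1
  assume "1 \<le> s k0" "1 \<le> t k1"
    and eq: "single_error_res_counts c (s, k0) = single_error_res_counts c (t, k1)"
  have "k0 = k1"
    using fun_cong[OF eq, of "(k0, c)"] assms
    by (simp add: single_error_res_counts_def split: if_splits)
  have diff: "s k - (if k = k0 then 1 else 0) = t k - (if k = k0 then 1 else 0)" for k
    using fun_cong[OF eq, of "(k, 0)"] \<open>k0 = k1\<close> by (simp add: single_error_res_counts_def)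
  have "s k = t k" for k
    using diff[of k] \<open>1 \<le> s k0\<close> \<open>1 \<le> t k1\<close> \<open>k0 = k1\<close> by (cases "k = k0") auto
  then show "s = t \<and> k0 = k1"
    using \<open>k0 = k1\<close> by auto
qed

lemma single_error_res_counts_marginals:
  assumes "c \<noteq> 0" "1 \<le> s k0"
  shows "(\<Sum>c'\<in>{0, c}. single_error_res_counts c (s, k0) (k, c')) = s k"
    and "(\<Prod>c'\<in>{0, c}. fact (single_error_res_counts c (s, k0) (k, c')))
           = (fact (s k - (if k = k0 then 1 else 0)) :: real)"
  using assms by (simp_all add: single_error_res_counts_def)

lemma counts_at_image_pos:
  assumes "i < n"
  shows "counts n f (f i) \<ge> 1"
proof -
  have "{j. j < n \<and> f j = f i} \<noteq> {}"
    using assms by blast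
  then show ?thesis
    unfolding counts_def by (simp add: Suc_le_eq card_gt_0_iff)
qed

lemma image_single_error_labelling:
  fixes n i0 :: nat
  assumes "n \<ge> 2" "i0 < n" and lab: "\<forall>k<n. lab k = (if k = i0 then c else 0)"
  shows "lab ` {..<n} = {0, c}"
proof
  show "lab ` {..<n} \<subseteq> {0, c}"
    using lab by auto
  define j where "j = (if i0 = 0 then 1 else 0::nat)"
  have "j < n" "lab j = 0" "lab i0 = c"
    using lab assms(1,2) by (auto simp: j_def)
  then show "{0, c} \<subseteq> lab ` {..<n}"
    using rev_image_eqI[of j "{..<n}" 0 lab] rev_image_eqI[of i0 "{..<n}" c lab] \<open>i0 < n\<close> by simp
qed

lemma herald_rate_single_error:
  assumes "n \<ge> 2" "i0 < n" "c \<noteq> 0" and lab: "\<forall>k<n. lab k = (if k = i0 then c else 0)"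
  shows "herald_rate U n lab =
    (\<Sum>(s, k0)\<in>(SIGMA s:counts n ` out_maps n. {k0. k0 < n \<and> 1 \<le> s k0}).
       if ideal U n s
       then (cmod (pattern_amp_at U n i0 k0 s))\<^sup>2 * (\<Prod>k<n. fact (s k - (if k = k0 then 1 else 0)))
       else 0)"
proof -
  define X where "X = (SIGMA s:counts n ` out_maps n. {k0. k0 < n \<and> 1 \<le> s k0})"
  have "finite X"
    unfolding X_def by (intro finite_SigmaI finite_imageI finite_out_maps) auto
  moreover have "inj_on (single_error_res_counts c) X"
    by (rule inj_on_subset[OF inj_on_single_error_res_counts[OF \<open>c \<noteq> 0\<close>]]) (auto simp: X_def)
  moreover have "(counts n f, f i0) \<in> X \<and>
      res_counts n lab f = single_error_res_counts c (counts n f, f i0)"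
    if "f \<in> out_maps n" for f
    using that counts_at_image_pos[OF \<open>i0 < n\<close>] out_maps_lt[OF that \<open>i0 < n\<close>]
      res_counts_single_error[OF \<open>i0 < n\<close> \<open>c \<noteq> 0\<close> lab] unfolding X_def by blast
  ultimately have "herald_rate U n lab = (\<Sum>x\<in>X.
      if ideal U n (herald_pattern n (\<lambda>k. \<Sum>c'\<in>{0, c}. single_error_res_counts c x (k, c')))
      then (cmod (\<Sum>f\<in>{f\<in>out_maps n. (counts n f, f i0) = x}. map_amp U n f))\<^sup>2
             * (\<Prod>k<n. \<Prod>c'\<in>{0, c}. fact (single_error_res_counts c x (k, c')))
      else 0)" (is "_ = (\<Sum>x\<in>X. ?summand x)")
    unfolding image_single_error_labelling[OF assms(1,2) lab, symmetric]
    by (rule herald_rate_reindex)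
  also have "\<dots> = (\<Sum>(s, k0)\<in>X.
       if ideal U n s
       then (cmod (pattern_amp_at U n i0 k0 s))\<^sup>2 * (\<Prod>k<n. fact (s k - (if k = k0 then 1 else 0)))
       else 0)" (is "_ = (\<Sum>x\<in>X. ?target x)")
  proof (rule sum.cong[OF refl])
    fix x assume "x \<in> X"
    then obtain s k0 where x: "x = (s, k0)" and "1 \<le> s k0" and "herald_pattern n s = s"
      using herald_pattern_counts \<open>n \<ge> 2\<close> by (auto simp: X_def)
    moreover have "{f\<in>out_maps n. (counts n f, f i0) = (s, k0)}
        = {f\<in>out_maps n. counts n f = s \<and> f i0 = k0}"
      by auto
    ultimately show "?summand x = ?target x"
      by (simp only: single_error_res_counts_marginals[OF \<open>c \<noteq> 0\<close>] pattern_amp_at_def prod.case)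
  qed
  finally show ?thesis
    unfolding X_def .
qed

lemma pattern_amp_nonzero_if_ideal: "ideal U n s \<Longrightarrow> pattern_amp U n s \<noteq> 0"
  by (auto simp: ideal_def fock_amp_def pattern_amp_def map_amp_def)

lemma prod_fact_decrement:
  fixes s :: "nat \<Rightarrow> nat"
  assumes "k0 < n" "1 \<le> s k0"
  shows "real (s k0) * (\<Prod>k<n. fact (s k - (if k = k0 then 1 else 0))) = (\<Prod>k<n. fact (s k) :: real)"
proof -
  have "(\<Prod>k<n. fact (s k - (if k = k0 then 1 else 0)) :: real)
      = fact (s k0 - 1) * (\<Prod>k\<in>{..<n} - {k0}. fact (s k))"
    using assms(1) by (simp add: prod.remove[OF finite_lessThan, of k0])
  moreover have "(\<Prod>k<n. fact (s k) :: real) = fact (s k0) * (\<Prod>k\<in>{..<n} - {k0}. fact (s k))"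
    using assms(1) by (simp add: prod.remove[OF finite_lessThan, of k0])
  moreover have "(fact (s k0) :: real) = real (s k0) * fact (s k0 - 1)"
    using assms(2) fact_reduce[of "s k0"] by simp
  ultimately show ?thesis
    by simp
qed

lemma sum_pattern_amp_at_sq:
  assumes U: "phase_transitive U n" and nonzero: "pattern_amp U n s \<noteq> 0"
    and "i0 < n" and total: "(\<Sum>k<n. s k) = n"
  shows "(\<Sum>k0\<in>{k0. k0 < n \<and> 1 \<le> s k0}.
            (cmod (pattern_amp_at U n i0 k0 s))\<^sup>2 * (\<Prod>k<n. fact (s k - (if k = k0 then 1 else 0))))
       = (cmod (pattern_amp U n s))\<^sup>2 * (\<Prod>k<n. fact (s k)) / real n"
proof -
  define P where "P = (cmod (pattern_amp U n s))\<^sup>2 * (\<Prod>k<n. fact (s k) :: real)"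
  have "n > 0"
    using \<open>i0 < n\<close> by simp
  have summand: "(cmod (pattern_amp_at U n i0 k0 s))\<^sup>2 * (\<Prod>k<n. fact (s k - (if k = k0 then 1 else 0)))
      = real (s k0) * P / (real n)\<^sup>2" if "k0 < n" "1 \<le> s k0" for k0
  proof -
    have "real n * cmod (pattern_amp_at U n i0 k0 s) = real (s k0) * cmod (pattern_amp U n s)"
      using arg_cong[OF pattern_amp_at_eq[OF U nonzero \<open>i0 < n\<close>, of k0], of norm]
      by (simp add: norm_mult)
    then have "cmod (pattern_amp_at U n i0 k0 s) = real (s k0) * cmod (pattern_amp U n s) / real n"
      using \<open>n > 0\<close> by (simp add: field_simps)
    then show ?thesis
      using prod_fact_decrement[of k0 n s, OF that]
      by (simp add: P_def power2_eq_square field_simps)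
  qed
  have "(\<Sum>k0\<in>{k0. k0 < n \<and> 1 \<le> s k0}. real (s k0)) = (\<Sum>k0<n. real (s k0))"
    by (rule sum.mono_neutral_left) auto
  also have "\<dots> = real n"
    using total by (metis of_nat_sum)
  finally have "(\<Sum>k0\<in>{k0. k0 < n \<and> 1 \<le> s k0}. real (s k0) * P / (real n)\<^sup>2) = P / real n"
    using \<open>n > 0\<close>
    by (simp add: sum_divide_distrib[symmetric] sum_distrib_right[symmetric] power2_eq_square)
  then show ?thesis
    using summand by (simp add: P_def)
qed

lemma herald_rate_single_error_eq:
  assumes U: "phase_transitive U n" and "n \<ge> 2" and sites: "error_sites n lab = {i0}"
  shows "herald_rate U n lab = indist_herald_rate U n / real n"
proof -
  have site_iff: "k < n \<and> lab k \<noteq> 0 \<longleftrightarrow> k = i0" for k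
    using sites unfolding error_sites_def by blast
  then have "i0 < n" "lab i0 \<noteq> 0" and lab: "\<forall>k<n. lab k = (if k = i0 then lab i0 else 0)"
    by metis+
  define C where "C = counts n ` out_maps n"
  define rate where
    "rate s = (if ideal U n s then (cmod (pattern_amp U n s))\<^sup>2 * (\<Prod>k<n. fact (s k)) else 0)" for s
  have "herald_rate U n lab = (\<Sum>s\<in>C. \<Sum>k0\<in>{k0. k0 < n \<and> 1 \<le> s k0}.
      if ideal U n s
      then (cmod (pattern_amp_at U n i0 k0 s))\<^sup>2 * (\<Prod>k<n. fact (s k - (if k = k0 then 1 else 0)))
      else 0)" (is "_ = (\<Sum>s\<in>C. ?inner s)")
    unfolding herald_rate_single_error[OF \<open>n \<ge> 2\<close> \<open>i0 < n\<close> \<open>lab i0 \<noteq> 0\<close> lab] C_def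
    by (subst sum.Sigma) (auto simp: finite_out_maps)
  also have "\<dots> = (\<Sum>s\<in>C. rate s / real n)"
  proof (rule sum.cong[OF refl])
    fix s assume "s \<in> C"
    then have "(\<Sum>k<n. s k) = n"
      using sum_counts by (auto simp: C_def)
    then show "?inner s = rate s / real n"
      using sum_pattern_amp_at_sq[OF U pattern_amp_nonzero_if_ideal \<open>i0 < n\<close>] by (auto simp: rate_def)
  qed
  also have "\<dots> = indist_herald_rate U n / real n"
    by (simp add: indist_herald_rate_def C_def rate_def sum_divide_distrib)
  finally show ?thesis .
qed

section \<open>Expansion in the error probability\<close>

lemma sum_by_error_count:
  assumes "finite P"
  shows "(\<Sum>lab\<in>P. F lab) = (\<Sum>lab\<in>{lab\<in>P. error_sites n lab = {}}. F lab)
           + (\<Sum>i<n. \<Sum>lab\<in>{lab\<in>P. error_sites n lab = {i}}. F lab)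
           + (\<Sum>lab\<in>{lab\<in>P. 2 \<le> card (error_sites n lab)}. F lab)"
proof -
  define A B C where "A = {lab\<in>P. error_sites n lab = {}}" and "B = {lab\<in>P. card (error_sites n lab) = 1}"
    and "C = {lab\<in>P. 2 \<le> card (error_sites n lab)}"
  have "P = (A \<union> B) \<union> C"
    by (auto simp: A_def B_def C_def simp flip: card_0_eq)
  then have "(\<Sum>lab\<in>P. F lab) = (\<Sum>lab\<in>(A \<union> B) \<union> C. F lab)"
    by (rule arg_cong)
  also have "\<dots> = (\<Sum>lab\<in>A \<union> B. F lab) + (\<Sum>lab\<in>C. F lab)"
    using assms by (intro sum.union_disjoint) (auto simp: A_def B_def C_def)
  also have "(\<Sum>lab\<in>A \<union> B. F lab) = (\<Sum>lab\<in>A. F lab) + (\<Sum>lab\<in>B. F lab)"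
    using assms by (intro sum.union_disjoint) (auto simp: A_def B_def)
  also have "B = (\<Union>i<n. {lab\<in>P. error_sites n lab = {i}})"
    unfolding B_def using error_sites_subset by (fastforce simp: card_1_singleton_iff)
  also have "(\<Sum>lab\<in>\<dots>. F lab) = (\<Sum>i<n. \<Sum>lab\<in>{lab\<in>P. error_sites n lab = {i}}. F lab)"
    using assms by (intro sum.UNION_disjoint) auto
  finally show ?thesis
    by (simp add: A_def C_def)
qed

lemma sum_many_errors_bound:
  assumes "\<forall>R. model = URS R \<longrightarrow> R \<ge> 1" "0 \<le> \<epsilon>" "\<epsilon> \<le> 1" "finite P"
  shows "\<bar>\<Sum>lab\<in>{lab\<in>P. 2 \<le> card (error_sites n lab)}. (\<Prod>k<n. label_weight model \<epsilon> (lab k)) * H lab\<bar>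
       \<le> \<epsilon>\<^sup>2 * (\<Sum>lab\<in>P. \<bar>H lab\<bar>)"
proof -
  have "\<bar>(\<Prod>k<n. label_weight model \<epsilon> (lab k)) * H lab\<bar> \<le> \<epsilon>\<^sup>2 * \<bar>H lab\<bar>"
    if "2 \<le> card (error_sites n lab)" for lab
  proof -
    have "(\<Prod>k<n. label_weight model \<epsilon> (lab k)) \<le> \<epsilon> ^ card (error_sites n lab)"
      by (rule weight_le_power_error_sites(2)[OF assms(1-3)])
    also have "\<dots> \<le> \<epsilon>\<^sup>2"
      using that assms(2,3) by (rule power_decreasing)
    finally show ?thesis
      using weight_le_power_error_sites(1)[OF assms(1-3)] by (simp add: abs_mult mult_right_mono)
  qed
  then have "\<bar>\<Sum>lab\<in>{lab\<in>P. 2 \<le> card (error_sites n lab)}. (\<Prod>k<n. label_weight model \<epsilon> (lab k)) * H lab\<bar>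
      \<le> (\<Sum>lab\<in>{lab\<in>P. 2 \<le> card (error_sites n lab)}. \<epsilon>\<^sup>2 * \<bar>H lab\<bar>)"
    by (intro order_trans[OF sum_abs sum_mono]) auto
  also have "\<dots> \<le> \<epsilon>\<^sup>2 * (\<Sum>lab\<in>P. \<bar>H lab\<bar>)"
    unfolding sum_distrib_left[symmetric] using assms(4) by (intro mult_left_mono sum_mono2) auto
  finally show ?thesis .
qed

lemma h_eps_expansion:
  assumes model: "\<forall>R. model = URS R \<longrightarrow> R \<ge> 1" and "n \<ge> 1" "0 \<le> \<epsilon>" "\<epsilon> \<le> 1"
    and no_error: "\<And>lab. error_sites n lab = {} \<Longrightarrow> herald_rate U n lab = Hz"
    and single_error: "\<And>lab i. error_sites n lab = {i} \<Longrightarrow> herald_rate U n lab = Hz / real n"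
  shows "\<bar>h_eps model U n \<epsilon> - (1 - \<epsilon>) ^ (n - 1) * Hz\<bar>
       \<le> \<epsilon>\<^sup>2 * (\<Sum>lab\<in>Pi\<^sub>E {..<n} (allowed_labels model). \<bar>herald_rate U n lab\<bar>)"
proof -
  define P where "P = Pi\<^sub>E {..<n} (allowed_labels model)"
  define W where "W lab = (\<Prod>k<n. label_weight model \<epsilon> (lab k))" for lab
  have "finite P"
    unfolding P_def by (intro finite_PiE) auto
  have no: "(\<Sum>lab\<in>{lab\<in>P. error_sites n lab = {}}. W lab * herald_rate U n lab) = (1 - \<epsilon>) ^ n * Hz"
    using no_error sum_weight_error_sites[OF model, of "{}" n \<epsilon>]
    by (simp add: P_def W_def flip: sum_distrib_right)
  have single: "(\<Sum>lab\<in>{lab\<in>P. error_sites n lab = {i}}. W lab * herald_rate U n lab)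
      = \<epsilon> * (1 - \<epsilon>) ^ (n - 1) * (Hz / real n)" if "i < n" for i
    using single_error sum_weight_error_sites[OF model, of "{i}" n \<epsilon>] that
    by (simp add: P_def W_def flip: sum_distrib_right sum_divide_distrib)
  have "(\<Sum>i<n. \<epsilon> * (1 - \<epsilon>) ^ (n - 1) * (Hz / real n)) = \<epsilon> * (1 - \<epsilon>) ^ (n - 1) * Hz"
    using \<open>n \<ge> 1\<close> by simp
  moreover have "(1 - \<epsilon>) ^ n = (1 - \<epsilon>) * (1 - \<epsilon>) ^ (n - 1)"
    using \<open>n \<ge> 1\<close> by (cases n) simp_all
  ultimately have "(1 - \<epsilon>) ^ n * Hz + (\<Sum>i<n. \<epsilon> * (1 - \<epsilon>) ^ (n - 1) * (Hz / real n))
      = ((1 - \<epsilon>) + \<epsilon>) * (1 - \<epsilon>) ^ (n - 1) * Hz"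
    by (simp only: distrib_right)
  then have collapse: "(1 - \<epsilon>) ^ n * Hz + (\<Sum>i<n. \<epsilon> * (1 - \<epsilon>) ^ (n - 1) * (Hz / real n))
      = (1 - \<epsilon>) ^ (n - 1) * Hz"
    by simp
  have "h_eps model U n \<epsilon> = (\<Sum>lab\<in>P. W lab * herald_rate U n lab)"
    by (simp add: h_eps_def P_def W_def)
  also have "\<dots> = (\<Sum>lab\<in>{lab\<in>P. error_sites n lab = {}}. W lab * herald_rate U n lab)
      + (\<Sum>i<n. \<Sum>lab\<in>{lab\<in>P. error_sites n lab = {i}}. W lab * herald_rate U n lab)
      + (\<Sum>lab\<in>{lab\<in>P. 2 \<le> card (error_sites n lab)}. W lab * herald_rate U n lab)"
    by (rule sum_by_error_count[OF \<open>finite P\<close>])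
  also have "\<dots> = (1 - \<epsilon>) ^ n * Hz + (\<Sum>i<n. \<epsilon> * (1 - \<epsilon>) ^ (n - 1) * (Hz / real n))
      + (\<Sum>lab\<in>{lab\<in>P. 2 \<le> card (error_sites n lab)}. W lab * herald_rate U n lab)"
    by (simp add: no single)
  finally have "h_eps model U n \<epsilon> - (1 - \<epsilon>) ^ (n - 1) * Hz
      = (\<Sum>lab\<in>{lab\<in>P. 2 \<le> card (error_sites n lab)}. W lab * herald_rate U n lab)"
    using collapse by linarith
  then show ?thesis
    using sum_many_errors_bound[OF model \<open>0 \<le> \<epsilon>\<close> \<open>\<epsilon> \<le> 1\<close> \<open>finite P\<close>, of n "herald_rate U n"]
    by (simp add: P_def W_def)
qed

lemma h_Phi1_eq:
  assumes model: "\<forall>R. model = URS R \<longrightarrow> R \<ge> 1" and "n \<ge> 1"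
    and single_error: "\<And>lab i. error_sites n lab = {i} \<Longrightarrow> herald_rate U n lab = Hz / real n"
  shows "h_Phi1 model U n = Hz / real n"
proof -
  have "error_sites n (\<lambda>k. if k = i then c else 0) = {i}" if "i < n" "c \<in> error_labels model i" for i c
    using that by (auto simp: error_sites_def error_labels_def)
  then have "h_Phi1 model U n
      = (\<Sum>i<n. \<Sum>c\<in>error_labels model i. Hz / real n / (real n * real (card (error_labels model i))))"
    unfolding h_Phi1_def using single_error by (intro sum.cong) auto
  also have "\<dots> = (\<Sum>i<n. Hz / real n / real n)"
    using card_error_labels_pos[OF model] by (intro sum.cong) (auto simp: card_gt_0_iff)
  also have "\<dots> = Hz / real n"
    using \<open>n \<ge> 1\<close> by simp
  finally show ?thesis .
qed

lemma one_minus_power_second_order: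
  fixes \<epsilon> :: real
  assumes "0 \<le> \<epsilon>" "\<epsilon> \<le> 1"
  shows "\<bar>(1 - \<epsilon>) ^ m - (1 - real m * \<epsilon>)\<bar> \<le> (real m * \<epsilon>)\<^sup>2"
proof -
  have term_bounds: "0 \<le> 1 - (1 - \<epsilon>) ^ j \<and> 1 - (1 - \<epsilon>) ^ j \<le> real m * \<epsilon>" if "j < m" for j
  proof -
    have "1 - real j * \<epsilon> \<le> (1 - \<epsilon>) ^ j"
      using Bernoulli_inequality[of "- \<epsilon>" j] assms by simp
    moreover have "real j * \<epsilon> \<le> real m * \<epsilon>"
      using that assms by (intro mult_right_mono) auto
    ultimately show ?thesis
      using assms by (simp add: power_le_one)
  qed
  have "(1 - \<epsilon>) ^ m - (1 - real m * \<epsilon>) = \<epsilon> * (\<Sum>j<m. 1 - (1 - \<epsilon>) ^ j)"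
    using one_diff_power_eq[of "1 - \<epsilon>" m] by (simp add: sum_subtractf algebra_simps)
  moreover have "0 \<le> (\<Sum>j<m. 1 - (1 - \<epsilon>) ^ j)"
    using term_bounds by (intro sum_nonneg) auto
  moreover have "(\<Sum>j<m. 1 - (1 - \<epsilon>) ^ j) \<le> of_nat (card {..<m}) * (real m * \<epsilon>)"
    using term_bounds by (intro sum_bounded_above) auto
  ultimately show ?thesis
    using assms by (simp add: abs_mult power2_eq_square mult_left_mono mult.assoc mult.left_commute)
qed

lemma bigo_second_order_remainder:
  fixes h :: "real \<Rightarrow> real"
  assumes bound: "\<And>\<epsilon>. 0 \<le> \<epsilon> \<Longrightarrow> \<epsilon> \<le> 1 \<Longrightarrow> \<bar>h \<epsilon> - (1 - \<epsilon>) ^ m * c\<bar> \<le> K * \<epsilon>\<^sup>2"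
  shows "(\<lambda>\<epsilon>. h \<epsilon> - (h 0 - real m * h 0 * \<epsilon>)) \<in> O[at_right 0](\<lambda>\<epsilon>. \<epsilon>\<^sup>2)"
proof (rule bigoI)
  have "h 0 = c"
    using bound[of 0] by simp
  have "\<bar>h \<epsilon> - (h 0 - real m * h 0 * \<epsilon>)\<bar> \<le> (K + \<bar>c\<bar> * (real m)\<^sup>2) * \<epsilon>\<^sup>2" if "0 < \<epsilon>" "\<epsilon> < 1" for \<epsilon>
  proof -
    have "h \<epsilon> - (h 0 - real m * h 0 * \<epsilon>) = (h \<epsilon> - (1 - \<epsilon>) ^ m * c) + c * ((1 - \<epsilon>) ^ m - (1 - real m * \<epsilon>))"
      by (simp add: \<open>h 0 = c\<close> algebra_simps)
    moreover have "\<bar>c * ((1 - \<epsilon>) ^ m - (1 - real m * \<epsilon>))\<bar> \<le> \<bar>c\<bar> * (real m * \<epsilon>)\<^sup>2"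
      unfolding abs_mult using one_minus_power_second_order[of \<epsilon> m] that
      by (intro mult_left_mono) auto
    ultimately show ?thesis
      using bound[of \<epsilon>] that by (simp add: algebra_simps power_mult_distrib)
  qed
  then show "\<forall>\<^sub>F \<epsilon> in at_right 0.
      norm (h \<epsilon> - (h 0 - real m * h 0 * \<epsilon>)) \<le> (K + \<bar>c\<bar> * (real m)\<^sup>2) * norm (\<epsilon>\<^sup>2)"
    unfolding eventually_at_right_field by (intro exI[of _ 1]) auto
qed

theorem theorem2:
  fixes ns :: "nat list" and model :: noise
  assumes "\<forall>m\<in>set ns. m \<ge> 2"
    and "prod_list ns > 2"
    and "\<forall>R. model = URS R \<longrightarrow> R \<ge> 1"
  shows "h_Phi1 model (fourier_tensor ns) (prod_list ns)
           = h_eps model (fourier_tensor ns) (prod_list ns) 0 / real (prod_list ns)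
       \<and> (\<lambda>\<epsilon>. h_eps model (fourier_tensor ns) (prod_list ns) \<epsilon>
              - (h_eps model (fourier_tensor ns) (prod_list ns) 0
                 - (real (prod_list ns) - 1) * h_eps model (fourier_tensor ns) (prod_list ns) 0 * \<epsilon>))
         \<in> O[at_right 0](\<lambda>\<epsilon>. \<epsilon>\<^sup>2)"
proof -
  define n U where "n = prod_list ns" and "U = fourier_tensor ns"
  define Hz K where "Hz = indist_herald_rate U n"
    and "K = (\<Sum>lab\<in>Pi\<^sub>E {..<n} (allowed_labels model). \<bar>herald_rate U n lab\<bar>)"
  have "n \<ge> 2"
    using assms(2) by (simp add: n_def)
  have U: "phase_transitive U n"
    unfolding U_def n_def using assms(1) by (intro phase_transitive_fourier_tensor) auto
  have no_error: "herald_rate U n lab = Hz" if "error_sites n lab = {}" for lab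
    using herald_rate_no_error[OF _ that] \<open>n \<ge> 2\<close> by (simp add: Hz_def)
  have single_error: "herald_rate U n lab = Hz / real n" if "error_sites n lab = {i}" for lab i
    using herald_rate_single_error_eq[OF U \<open>n \<ge> 2\<close> that] by (simp add: Hz_def)
  have expansion: "\<bar>h_eps model U n \<epsilon> - (1 - \<epsilon>) ^ (n - 1) * Hz\<bar> \<le> K * \<epsilon>\<^sup>2"
    if "0 \<le> \<epsilon>" "\<epsilon> \<le> 1" for \<epsilon>
    using h_eps_expansion[OF assms(3) _ that no_error single_error] \<open>n \<ge> 2\<close>
    by (simp add: K_def mult.commute)
  have "h_eps model U n 0 = Hz"
    using expansion[of 0] by simp
  then have "h_Phi1 model U n = h_eps model U n 0 / real n"
    using h_Phi1_eq[OF assms(3) _ single_error] \<open>n \<ge> 2\<close> by simp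
  moreover have "(\<lambda>\<epsilon>. h_eps model U n \<epsilon> - (h_eps model U n 0 - real (n - 1) * h_eps model U n 0 * \<epsilon>))
      \<in> O[at_right 0](\<lambda>\<epsilon>. \<epsilon>\<^sup>2)"
    using expansion by (rule bigo_second_order_remainder)
  moreover have "real (n - 1) = real n - 1"
    using \<open>n \<ge> 2\<close> by simp
  ultimately show ?thesis
    unfolding n_def U_def by simp
qed

end
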